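(* Let $K^{(1)},K^{(2)}$ be independent fractal percolations on $[0,1]$ with the same parameters $M\in\mathbb{N}_{\geq2}$ and $p\in[0,1]$. Then for any $n\in\mathbb{N}_0$, $$\mathbb{E}N(K_n^{(1)}\cap K_n^{(2)})=(Mp^2)^n\left(2-2M^{-n}-4p\frac{M-1}{M-p}\left[1-\left(\frac pM\right)^n\right]+2p^2\frac{M-1}{M-p^2}\left[1-\left(\frac{p^2}{M}\right)^n\right]\right).$$
   Context: Fractal percolation on $[0,1]$: $K_0=[0,1]$; given $K_{n-1}$, a union of closed grid intervals of length $M^{-(n-1)}$, each is divided into $M$ closed subintervals of length $M^{-n}$, each kept independently (of everything else) with probability $p$; $K_n$ is the union of kept subintervals. $N(A)$ denotes the number of isolated points of $A$. *)

theory Defs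
  imports "HOL-Probability.Probability"
begin

text \<open>Level-n grid intervals of [0,1] are indexed by i < M^n; interval i is
  [i/M^n, (i+1)/M^n].  A configuration K_n is encoded by the (finite) set of
  indices of kept level-n intervals.\<close>

definition children :: "nat \<Rightarrow> nat set \<Rightarrow> nat set" where
  "children M S = (\<Union>i\<in>S. {i * M..<i * M + M})"

fun frac_perc :: "nat \<Rightarrow> real \<Rightarrow> nat \<Rightarrow> nat set pmf" where
  "frac_perc M p 0 = return_pmf {0}"
| "frac_perc M p (Suc n) =
     bind_pmf (frac_perc M p n)
       (\<lambda>S. map_pmf (\<lambda>f. {j \<in> children M S. f j})
              (Pi_pmf (children M S) False (\<lambda>_. bernoulli_pmf p)))"

definition grid_set :: "nat \<Rightarrow> nat \<Rightarrow> nat set \<Rightarrow> real set" where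
  "grid_set M n S = (\<Union>i\<in>S. {real i / real M ^ n .. (real i + 1) / real M ^ n})"

definition isolated_pts :: "real set \<Rightarrow> real set" where
  "isolated_pts A = {x \<in> A. \<not> x islimpt A}"

definition num_isolated :: "real set \<Rightarrow> nat" where
  "num_isolated A = card (isolated_pts A)"

end

(* An isolated point of K_n^(1) \<inter> K_n^(2) is a grid point j/M^n, 0 < j < M^n, at which one
   configuration keeps the level-n interval to the left of the point but not the one to the
   right, and the other configuration does the opposite.  A fixed interval survives with
   probability p^n, so by independence this happens with probability 2 (p^n - q_n(j))^2, where
   q_n(j) is the probability that both intervals j - 1 and j survive.  Two neighbouring
   intervals either have the same parent, and then q_n(j) = p^(n+1), or their parents are
   again neighbours, and then q_n(j) = p^2 q_(n-1)(j/M).  Hence the sums of q_n(j) and of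
   q_n(j)^2 satisfy linear recurrences, whose solutions give the formula. *)

theory Submission
  imports Defs
begin

lemma measure_bind_pmf:
  "measure_pmf.prob (bind_pmf M N) X = (\<integral>x. measure_pmf.prob (N x) X \<partial>measure_pmf M)"
proof -
  have "emeasure (bind_pmf M N) X = (\<integral>\<^sup>+x. emeasure (N x) X \<partial>measure_pmf M)"
    by (rule emeasure_bind_pmf)
  also have "\<dots> = (\<integral>\<^sup>+x. ennreal (measure_pmf.prob (N x) X) \<partial>measure_pmf M)"
    by (simp add: measure_pmf.emeasure_eq_measure)
  also have "\<dots> = ennreal (\<integral>x. measure_pmf.prob (N x) X \<partial>measure_pmf M)"
    by (intro nn_integral_eq_integral measure_pmf.integrable_const_bound[where B=1]) auto
  finally show ?thesis
    by (simp add: measure_pmf.emeasure_eq_measure)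
qed

(* measure_pmf_prob_product needs countable sets, so first pass to the (countable) supports. *)
lemma measure_pair_pmf_Times:
  "measure_pmf.prob (pair_pmf P Q) (A \<times> B) = measure_pmf.prob P A * measure_pmf.prob Q B"
proof -
  have "measure_pmf.prob (pair_pmf P Q) (A \<times> B) =
        measure_pmf.prob (pair_pmf P Q) ((A \<inter> set_pmf P) \<times> (B \<inter> set_pmf Q))"
    by (subst measure_Int_set_pmf[symmetric]) (auto intro: arg_cong2[where f=measure])
  also have "\<dots> = measure_pmf.prob P (A \<inter> set_pmf P) * measure_pmf.prob Q (B \<inter> set_pmf Q)"
    by (rule measure_pmf_prob_product) auto
  finally show ?thesis
    by (simp add: measure_Int_set_pmf)
qed

lemma measure_Pi_bernoulli_all_True:
  assumes "finite C" "A \<subseteq> C" "0 \<le> p" "p \<le> 1"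
  shows "measure_pmf.prob (Pi_pmf C dflt (\<lambda>_. bernoulli_pmf p)) {f. \<forall>j\<in>A. f j}
         = p ^ card A"
proof -
  have "{f. \<forall>j\<in>A. f j} = Pi C (\<lambda>j. if j \<in> A then {True} else UNIV)"
    using assms(2) by (auto simp: Pi_def)
  then have "measure_pmf.prob (Pi_pmf C dflt (\<lambda>_. bernoulli_pmf p)) {f. \<forall>j\<in>A. f j}
             = (\<Prod>j\<in>C. if j \<in> A then p else 1)"
    using assms by (simp add: measure_Pi_pmf_Pi measure_pmf_single if_distrib cong: if_cong)
  also have "\<dots> = p ^ card A"
    using assms(1,2) by (simp add: prod.If_cases Int_absorb1)
  finally show ?thesis .
qed

lemma mem_children_iff:
  assumes "M > 0"
  shows "i \<in> children M S \<longleftrightarrow> i div M \<in> S"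
proof -
  have "i \<in> {a * M..<a * M + M} \<longleftrightarrow> i div M = a" for a
  proof
    assume "i \<in> {a * M..<a * M + M}"
    then show "i div M = a"
      by (intro div_nat_eqI) (auto simp: mult.commute)
  next
    assume "i div M = a"
    then show "i \<in> {a * M..<a * M + M}"
      using dividend_less_div_times[OF assms, of i] by auto
  qed
  then show ?thesis
    by (auto simp: children_def)
qed

lemma children_subset_lessThan:
  assumes "S \<subseteq> {..<K}"
  shows "children M S \<subseteq> {..<K * M}"
  unfolding children_def
proof (intro UN_least subsetI)
  fix i j assume "i \<in> S" "j \<in> {i * M..<i * M + M}"
  moreover have "Suc i * M \<le> K * M"
    using assms \<open>i \<in> S\<close> by (intro mult_right_mono) auto
  ultimately show "j \<in> {..<K * M}"
    by simp
qed

lemma set_pmf_frac_perc_subset: "S \<in> set_pmf (frac_perc M p n) \<Longrightarrow> S \<subseteq> {..<M ^ n}"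
proof (induction n arbitrary: S)
  case (Suc n)
  then obtain S0 f where S0: "S0 \<in> set_pmf (frac_perc M p n)"
    and S: "S = {j \<in> children M S0. f j}"
    by auto
  have "S \<subseteq> children M S0"
    using S by blast
  also have "\<dots> \<subseteq> {..<M ^ n * M}"
    by (rule children_subset_lessThan) (rule Suc.IH[OF S0])
  finally show ?case
    by (simp add: mult.commute)
qed simp

lemma finite_set_pmf_frac_perc: "finite (set_pmf (frac_perc M p n))"
  by (rule finite_subset[of _ "Pow {..<M ^ n}"]) (auto dest: set_pmf_frac_perc_subset)

lemma finite_in_set_pmf_frac_perc: "S \<in> set_pmf (frac_perc M p n) \<Longrightarrow> finite S"
  by (meson finite_lessThan finite_subset set_pmf_frac_perc_subset)

lemma prob_frac_perc_Suc_superset: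
  assumes "M > 0" "finite A" "0 \<le> p" "p \<le> 1"
  shows "measure_pmf.prob (frac_perc M p (Suc n)) {S. A \<subseteq> S}
         = p ^ card A * measure_pmf.prob (frac_perc M p n) {S. (\<lambda>i. i div M) ` A \<subseteq> S}"
proof -
  have parents: "(\<lambda>i. i div M) ` A \<subseteq> S0 \<longleftrightarrow> A \<subseteq> children M S0" for S0
    using mem_children_iff[OF assms(1)] by blast
  have offspring: "measure_pmf.prob (map_pmf (\<lambda>f. {j \<in> children M S0. f j})
                     (Pi_pmf (children M S0) False (\<lambda>_. bernoulli_pmf p))) {S. A \<subseteq> S}
                   = p ^ card A * indicator {S. (\<lambda>i. i div M) ` A \<subseteq> S} S0"
    if "finite S0" for S0
  proof (cases "A \<subseteq> children M S0")
    case True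
    moreover have "finite (children M S0)"
      using that by (simp add: children_def)
    moreover have "(\<lambda>f. {j \<in> children M S0. f j}) -` {S. A \<subseteq> S} = {f. \<forall>j\<in>A. f j}"
      using True by auto
    ultimately show ?thesis
      using parents measure_Pi_bernoulli_all_True assms(3,4) by simp
  next
    case False
    then have "(\<lambda>f. {j \<in> children M S0. f j}) -` {S. A \<subseteq> S} = {}"
      by auto
    with False show ?thesis
      using parents by simp
  qed
  have "measure_pmf.prob (frac_perc M p (Suc n)) {S. A \<subseteq> S}
        = (\<integral>S0. p ^ card A * indicator {S. (\<lambda>i. i div M) ` A \<subseteq> S} S0
             \<partial>measure_pmf (frac_perc M p n))"
    unfolding frac_perc.simps measure_bind_pmf
    by (intro integral_cong_AE)
      (simp_all add: AE_measure_pmf_iff offspring finite_in_set_pmf_frac_perc del: measure_map_pmf)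
  then show ?thesis
    by simp
qed

lemma prob_frac_perc_mem:
  assumes "M > 0" "0 \<le> p" "p \<le> 1"
  shows "measure_pmf.prob (frac_perc M p n) {S. i \<in> S} = (if i < M ^ n then p ^ n else 0)"
proof (induction n arbitrary: i)
  case (Suc n)
  have "i div M < M ^ n \<longleftrightarrow> i < M ^ Suc n"
    using assms(1) by (simp add: div_less_iff_less_mult mult.commute)
  then show ?case
    using prob_frac_perc_Suc_superset[OF assms(1) _ assms(2,3), of "{i}" n] Suc.IH[of "i div M"]
    by simp
qed simp

definition adjacent_pair_prob :: "nat \<Rightarrow> real \<Rightarrow> nat \<Rightarrow> nat \<Rightarrow> real" where
  "adjacent_pair_prob M p n j = measure_pmf.prob (frac_perc M p n) {S. {j - 1, j} \<subseteq> S}"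

lemma adjacent_pair_prob_siblings:
  assumes "M > 0" "0 \<le> p" "p \<le> 1" "1 \<le> r" "r < M" "a < M ^ n"
  shows "adjacent_pair_prob M p (Suc n) (a * M + r) = p ^ (n + 2)"
proof -
  have "(a * M + r - 1) div M = a"
    using assms by (intro div_nat_eqI) (auto simp: algebra_simps)
  moreover have "(a * M + r) div M = a"
    using assms by simp
  ultimately have "(\<lambda>i. i div M) ` {a * M + r - 1, a * M + r} = {a}"
    by simp
  moreover have "card {a * M + r - 1, a * M + r} = 2"
    using assms by simp
  ultimately show ?thesis
    using prob_frac_perc_Suc_superset[OF assms(1) _ assms(2,3), of "{a * M + r - 1, a * M + r}" n]
      prob_frac_perc_mem[OF assms(1-3), of n a] assms(6)
    by (simp add: adjacent_pair_prob_def power2_eq_square)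
qed

lemma adjacent_pair_prob_straddling:
  assumes "M > 0" "0 \<le> p" "p \<le> 1" "1 \<le> a"
  shows "adjacent_pair_prob M p (Suc n) (a * M) = p\<^sup>2 * adjacent_pair_prob M p n a"
proof -
  have "(a * M - 1) div M = a - 1"
    using assms by (intro div_nat_eqI) (auto simp: algebra_simps diff_mult_distrib2)
  then have "(\<lambda>i. i div M) ` {a * M - 1, a * M} = {a - 1, a}"
    using assms(1) by simp
  moreover have "card {a * M - 1, a * M} = 2"
    using assms by (cases "a * M") auto
  ultimately show ?thesis
    using prob_frac_perc_Suc_superset[OF assms(1) _ assms(2,3), of "{a * M - 1, a * M}" n]
    by (simp add: adjacent_pair_prob_def)
qed

lemma sum_lessThan_eq_0_plus:
  fixes g :: "nat \<Rightarrow> 'a::comm_monoid_add"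
  assumes "N \<ge> 1"
  shows "(\<Sum>j<N. g j) = g 0 + (\<Sum>j\<in>{1..<N}. g j)"
  using sum.atLeast_Suc_lessThan[of 0 N g] assms by (simp add: atLeast0LessThan)

lemma sum_by_blocks:
  fixes F :: "nat \<Rightarrow> real"
  assumes "K \<ge> 1" "M \<ge> 1"
    and inner: "\<And>a r. a < K \<Longrightarrow> 1 \<le> r \<Longrightarrow> r < M \<Longrightarrow> F (a * M + r) = c"
    and boundary: "\<And>a. 1 \<le> a \<Longrightarrow> a < K \<Longrightarrow> F (a * M) = H a"
  shows "(\<Sum>j\<in>{1..<K * M}. F j) = real K * (real M - 1) * c + (\<Sum>a\<in>{1..<K}. H a)"
proof -
  have block: "(\<Sum>j\<in>{a * M..<a * M + M}. F j) = F (a * M) + (real M - 1) * c" if "a < K" for a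
  proof -
    have "(\<Sum>j\<in>{a * M..<a * M + M}. F j) = F (a * M) + (\<Sum>j\<in>{Suc (a * M)..<a * M + M}. F j)"
      using assms(2) by (intro sum.atLeast_Suc_lessThan) simp
    also have "(\<Sum>j\<in>{Suc (a * M)..<a * M + M}. F j) = (\<Sum>j\<in>{Suc (a * M)..<a * M + M}. c)"
    proof (rule sum.cong[OF refl])
      fix j assume j: "j \<in> {Suc (a * M)..<a * M + M}"
      then have "F (a * M + (j - a * M)) = c"
        by (intro inner[OF that]) auto
      with j show "F j = c"
        by simp
    qed
    finally show ?thesis
      using assms(2) by (simp add: of_nat_diff)
  qed
  have "F 0 + (\<Sum>j\<in>{1..<K * M}. F j) = (\<Sum>j<K * M. F j)"
    using assms(1,2) by (simp add: sum_lessThan_eq_0_plus)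
  also have "\<dots> = (\<Sum>a<K. \<Sum>j\<in>{a * M..<a * M + M}. F j)"
    by (rule sum.nat_group[symmetric])
  also have "\<dots> = (\<Sum>a<K. F (a * M)) + real K * (real M - 1) * c"
    by (simp add: block sum.distrib)
  also have "(\<Sum>a<K. F (a * M)) = F 0 + (\<Sum>a\<in>{1..<K}. H a)"
    using assms(1) boundary by (simp add: sum_lessThan_eq_0_plus)
  finally show ?thesis
    by simp
qed

definition adjacent_pair_moment :: "nat \<Rightarrow> real \<Rightarrow> nat \<Rightarrow> nat \<Rightarrow> real" where
  "adjacent_pair_moment M p n k = (\<Sum>j\<in>{1..<M ^ n}. adjacent_pair_prob M p n j ^ k)"

lemma adjacent_pair_moment_Suc:
  assumes "M > 0" "0 \<le> p" "p \<le> 1"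
  shows "adjacent_pair_moment M p (Suc n) k
         = real M ^ n * (real M - 1) * (p ^ k) ^ (n + 2) + (p ^ k)\<^sup>2 * adjacent_pair_moment M p n k"
proof -
  have swap: "(p ^ i) ^ k = (p ^ k) ^ i" for i
    by (metis power_mult mult.commute)
  have "adjacent_pair_moment M p (Suc n) k
        = (\<Sum>j\<in>{1..<M ^ n * M}. adjacent_pair_prob M p (Suc n) j ^ k)"
    by (simp add: adjacent_pair_moment_def mult.commute)
  also have "\<dots> = real (M ^ n) * (real M - 1) * (p ^ k) ^ (n + 2)
                   + (\<Sum>a\<in>{1..<M ^ n}. (p ^ k)\<^sup>2 * adjacent_pair_prob M p n a ^ k)"
    using assms by (intro sum_by_blocks)
      (auto simp: adjacent_pair_prob_siblings adjacent_pair_prob_straddling power_mult_distrib swap)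
  finally show ?thesis
    by (simp add: adjacent_pair_moment_def sum_distrib_left)
qed

lemma linear_recurrence_closed_form:
  fixes m x :: real and s :: "nat \<Rightarrow> real"
  assumes "m \<noteq> 0" "m \<noteq> x" "s 0 = 0"
    and "\<And>n. s (Suc n) = m ^ n * (m - 1) * x ^ (n + 2) + x\<^sup>2 * s n"
  shows "s n = (m * x) ^ n * (x * (m - 1) / (m - x)) * (1 - (x / m) ^ n)"
proof (induction n)
  case (Suc n)
  have "m - x \<noteq> 0"
    using assms(2) by simp
  with assms(1) show ?case
    unfolding assms(4) Suc.IH
    by (simp add: field_simps power2_eq_square power_mult_distrib power_divide)
qed (simp add: assms(3))

lemma adjacent_pair_moment_eq:
  assumes "M \<ge> 2" "0 \<le> p" "p \<le> 1"
  shows "adjacent_pair_moment M p n k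
         = (real M * p ^ k) ^ n * (p ^ k * (real M - 1) / (real M - p ^ k))
           * (1 - (p ^ k / real M) ^ n)"
proof (rule linear_recurrence_closed_form)
  show "real M \<noteq> p ^ k"
    using assms power_le_one[of p k] by auto
  show "adjacent_pair_moment M p 0 k = 0"
    by (simp add: adjacent_pair_moment_def)
qed (use assms adjacent_pair_moment_Suc in auto)

definition crossing :: "nat set \<Rightarrow> nat set \<Rightarrow> nat \<Rightarrow> bool" where
  "crossing S T j \<longleftrightarrow> (j - 1 \<in> S - T \<and> j \<in> T - S) \<or> (j - 1 \<in> T - S \<and> j \<in> S - T)"

lemma mem_grid_set:
  assumes "M > 0"
  shows "x \<in> grid_set M n S
         \<longleftrightarrow> (\<exists>i\<in>S. real i \<le> x * real M ^ n \<and> x * real M ^ n \<le> real i + 1)"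
  using assms by (auto simp: grid_set_def divide_le_eq le_divide_eq)

lemma touching_unit_intervals:
  fixes t :: real
  assumes "real i \<le> t" "t \<le> real i + 1" "real k \<le> t" "t \<le> real k + 1" "i < k"
  shows "k = Suc i \<and> t = real k"
proof -
  have "k < i + 2"
    using assms by linarith
  then have "k = Suc i"
    using assms(5) by simp
  then show ?thesis
    using assms by simp
qed

lemma islimpt_grid_set_inter:
  assumes "M > 0" "i \<in> S" "i \<in> T" "real i \<le> x * real M ^ n" "x * real M ^ n \<le> real i + 1"
  shows "x islimpt (grid_set M n S \<inter> grid_set M n T)"
proof -
  define d where "d = real M ^ n"
  have "d > 0"
    using assms(1) by (simp add: d_def)
  have "{real i / d .. (real i + 1) / d} \<subseteq> grid_set M n S \<inter> grid_set M n T"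
    using assms(2,3) unfolding grid_set_def d_def by auto
  moreover have "x islimpt {real i / d .. (real i + 1) / d}"
    using \<open>d > 0\<close> assms(4,5)
    by (simp add: d_def divide_le_eq le_divide_eq divide_strict_right_mono)
  ultimately show ?thesis
    using islimpt_subset by blast
qed

(* Only the intervals j - 1 and j come within 1/M^n of the point j/M^n. *)
lemma not_islimpt_grid_set_inter:
  assumes "M > 0" "1 \<le> j" "j \<notin> A" "j - 1 \<notin> B"
  shows "\<not> (real j / real M ^ n) islimpt (grid_set M n A \<inter> grid_set M n B)"
proof
  define d where "d = real M ^ n"
  have "d > 0"
    using assms(1) by (simp add: d_def)
  assume "(real j / real M ^ n) islimpt (grid_set M n A \<inter> grid_set M n B)"
  then obtain y where "y \<in> grid_set M n A \<inter> grid_set M n B" "y \<noteq> real j / d"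
      "dist y (real j / d) < 1 / d"
    using \<open>d > 0\<close> unfolding islimpt_approachable d_def by (meson divide_pos_pos zero_less_one)
  then have y: "y \<in> grid_set M n A" "y \<in> grid_set M n B" "y \<noteq> real j / d"
      "dist y (real j / d) < 1 / d"
    by simp_all
  obtain i where i: "i \<in> A" "real i \<le> y * d" "y * d \<le> real i + 1"
    using y(1) mem_grid_set[OF assms(1)] d_def by blast
  obtain k where k: "k \<in> B" "real k \<le> y * d" "y * d \<le> real k + 1"
    using y(2) mem_grid_set[OF assms(1)] d_def by blast
  have "\<bar>y * d - real j\<bar> < 1" "y * d \<noteq> real j"
    using y(3,4) \<open>d > 0\<close> by (auto simp: dist_real_def field_simps)
  then consider "real j - 1 < y * d" "y * d < real j" | "real j < y * d" "y * d < real j + 1"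
    by linarith
  then show False
  proof cases
    case 1
    then have "k = j - 1"
      using k by linarith
    with k(1) assms(4) show False
      by simp
  next
    case 2
    then have "i = j"
      using i by linarith
    with i(1) assms(3) show False
      by simp
  qed
qed

lemma isolated_pts_grid_set_inter_crossing:
  assumes "M > 0" "x \<in> isolated_pts (grid_set M n S \<inter> grid_set M n T)"
  shows "\<exists>j\<ge>1. crossing S T j \<and> x = real j / real M ^ n"
proof -
  define t where "t = x * real M ^ n"
  have t: "x = t / real M ^ n"
    using assms(1) by (simp add: t_def)
  obtain i k where i: "i \<in> S" "real i \<le> t" "t \<le> real i + 1"
    and k: "k \<in> T" "real k \<le> t" "t \<le> real k + 1"
    using assms mem_grid_set[OF assms(1)] by (auto simp: isolated_pts_def t_def)
  have not_common: "\<not> (l \<in> S \<and> l \<in> T)" if "real l \<le> t" "t \<le> real l + 1" for l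
    using islimpt_grid_set_inter[OF assms(1), of l S T x n] that assms(2)
    by (auto simp: isolated_pts_def t_def)
  have "i \<noteq> k"
    using not_common[OF i(2,3)] i(1) k(1) by auto
  then consider "i < k" | "k < i"
    by linarith
  then show ?thesis
  proof cases
    case 1
    then have "k = Suc i" "t = real k"
      using touching_unit_intervals[OF i(2,3) k(2,3)] by auto
    moreover have "crossing S T k"
      using i k not_common[of i] not_common[of k] \<open>k = Suc i\<close> \<open>t = real k\<close>
      by (auto simp: crossing_def)
    ultimately show ?thesis
      using t by auto
  next
    case 2
    then have "i = Suc k" "t = real i"
      using touching_unit_intervals[OF k(2,3) i(2,3)] by auto
    moreover have "crossing S T i"
      using i k not_common[of i] not_common[of k] \<open>i = Suc k\<close> \<open>t = real i\<close>
      by (auto simp: crossing_def)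
    ultimately show ?thesis
      using t by auto
  qed
qed

lemma crossing_isolated_pts_grid_set_inter:
  assumes "M > 0" "1 \<le> j" "crossing S T j"
  shows "real j / real M ^ n \<in> isolated_pts (grid_set M n S \<inter> grid_set M n T)"
proof -
  have scaled: "real j / real M ^ n * real M ^ n = real j"
    using assms(1) by simp
  have "real j / real M ^ n \<in> grid_set M n A" if "j - 1 \<in> A \<or> j \<in> A" for A
    using that mem_grid_set[OF assms(1), of "real j / real M ^ n" n A] scaled assms(2)
    by (force simp: of_nat_diff)
  moreover have "\<not> (real j / real M ^ n) islimpt (grid_set M n S \<inter> grid_set M n T)"
    using assms(3) not_islimpt_grid_set_inter[OF assms(1,2), of S T n]
      not_islimpt_grid_set_inter[OF assms(1,2), of T S n]
    by (auto simp: crossing_def Int_commute)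
  ultimately show ?thesis
    using assms(3) by (auto simp: isolated_pts_def crossing_def)
qed

lemma num_isolated_grid_set_inter:
  assumes "M > 0" "S \<subseteq> {..<M ^ n}" "T \<subseteq> {..<M ^ n}"
  shows "num_isolated (grid_set M n S \<inter> grid_set M n T)
         = card {j \<in> {1..<M ^ n}. crossing S T j}"
proof -
  have "isolated_pts (grid_set M n S \<inter> grid_set M n T)
        = (\<lambda>j. real j / real M ^ n) ` {j. 1 \<le> j \<and> crossing S T j}"
    using isolated_pts_grid_set_inter_crossing[OF assms(1)]
      crossing_isolated_pts_grid_set_inter[OF assms(1)]
    by blast
  moreover have "{j. 1 \<le> j \<and> crossing S T j} = {j \<in> {1..<M ^ n}. crossing S T j}"
    using assms(2,3) by (auto simp: crossing_def)
  moreover have "inj (\<lambda>j. real j / real M ^ n)"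
    using assms(1) by (intro injI) simp
  ultimately show ?thesis
    unfolding num_isolated_def by (simp add: card_image inj_on_subset)
qed

lemma measure_pmf_mem_not_mem:
  "measure_pmf.prob P {S. i \<in> S \<and> i' \<notin> S}
   = measure_pmf.prob P {S. i \<in> S} - measure_pmf.prob P {S. {i, i'} \<subseteq> S}"
proof -
  have "{S. i \<in> S \<and> i' \<notin> S} = {S. i \<in> S} - {S. {i, i'} \<subseteq> S}"
    by auto
  then show ?thesis
    by (simp add: measure_pmf.finite_measure_Diff subset_iff)
qed

lemma prob_frac_perc_only_one_of_adjacent:
  assumes "M > 0" "0 \<le> p" "p \<le> 1" "1 \<le> j" "j < M ^ n"
  shows "measure_pmf.prob (frac_perc M p n) {S. j - 1 \<in> S \<and> j \<notin> S}
         = p ^ n - adjacent_pair_prob M p n j"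
    and "measure_pmf.prob (frac_perc M p n) {S. j \<in> S \<and> j - 1 \<notin> S}
         = p ^ n - adjacent_pair_prob M p n j"
  using assms
  by (simp_all add: measure_pmf_mem_not_mem prob_frac_perc_mem adjacent_pair_prob_def insert_commute)

lemma prob_crossing:
  assumes "M > 0" "0 \<le> p" "p \<le> 1" "1 \<le> j" "j < M ^ n"
  shows "measure_pmf.prob (pair_pmf (frac_perc M p n) (frac_perc M p n)) {(S, T). crossing S T j}
         = 2 * (p ^ n - adjacent_pair_prob M p n j)\<^sup>2"
proof -
  define L where "L = {S. j - 1 \<in> S \<and> j \<notin> S}"
  define R where "R = {S. j \<in> S \<and> j - 1 \<notin> S}"
  have "{(S, T). crossing S T j} = L \<times> R \<union> R \<times> L"
    by (auto simp: crossing_def L_def R_def)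
  moreover have "L \<times> R \<inter> R \<times> L = {}"
    by (auto simp: L_def R_def)
  ultimately show ?thesis
    using prob_frac_perc_only_one_of_adjacent[OF assms]
    by (simp add: measure_pmf.finite_measure_Union measure_pair_pmf_Times L_def R_def
        power2_eq_square)
qed

lemma expectation_num_isolated_eq_sum_prob_crossing:
  fixes M :: nat and p :: real and n :: nat
  assumes "M > 0"
  shows "measure_pmf.expectation (pair_pmf (frac_perc M p n) (frac_perc M p n))
           (\<lambda>(S, T). real (num_isolated (grid_set M n S \<inter> grid_set M n T)))
         = (\<Sum>j\<in>{1..<M ^ n}.
              measure_pmf.prob (pair_pmf (frac_perc M p n) (frac_perc M p n)) {(S, T). crossing S T j})"
    (is "measure_pmf.expectation ?P _ = _")
proof -
  have count: "real (num_isolated (grid_set M n S \<inter> grid_set M n T))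
               = (\<Sum>j\<in>{1..<M ^ n}. indicator {(S, T). crossing S T j} (S, T))"
    if "S \<in> set_pmf (frac_perc M p n)" "T \<in> set_pmf (frac_perc M p n)" for S T
    using that
    by (subst num_isolated_grid_set_inter[OF assms(1)])
      (simp_all add: set_pmf_frac_perc_subset indicator_def sum.If_cases Int_def)
  have "measure_pmf.expectation ?P
          (\<lambda>(S, T). real (num_isolated (grid_set M n S \<inter> grid_set M n T)))
        = measure_pmf.expectation ?P
            (\<lambda>ST. \<Sum>j\<in>{1..<M ^ n}. indicator {(S, T). crossing S T j} ST)"
    by (intro integral_cong_AE) (auto simp: AE_measure_pmf_iff count)
  also have "\<dots> = (\<Sum>j\<in>{1..<M ^ n}.
                      measure_pmf.expectation ?P (indicator {(S, T). crossing S T j}))"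
    by (rule Bochner_Integration.integral_sum)
      (simp add: finite_set_pmf_frac_perc integrable_measure_pmf_finite)
  also have "\<dots> = (\<Sum>j\<in>{1..<M ^ n}. measure_pmf.prob ?P {(S, T). crossing S T j})"
    by simp
  finally show ?thesis .
qed

lemma isolated_count_algebra:
  fixes m p c d :: real
  assumes "m \<noteq> 0"
  shows "2 * ((m ^ n - 1) * (p ^ n)\<^sup>2 - 2 * p ^ n * ((m * p) ^ n * c * (1 - (p / m) ^ n))
              + (m * p\<^sup>2) ^ n * d * (1 - (p\<^sup>2 / m) ^ n))
         = (m * p\<^sup>2) ^ n
           * (2 - 2 / m ^ n - 4 * c * (1 - (p / m) ^ n) + 2 * d * (1 - (p\<^sup>2 / m) ^ n))"
proof -
  have square: "(m ^ n - 1) * (p ^ n)\<^sup>2 = (m * p\<^sup>2) ^ n * (1 - 1 / m ^ n)"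
    using assms by (simp add: power_mult_distrib power2_eq_square field_simps)
  have "p ^ n * (m * p) ^ n = (m * p\<^sup>2) ^ n"
    by (simp add: power_mult_distrib power2_eq_square)
  then have cross: "2 * p ^ n * ((m * p) ^ n * c * (1 - (p / m) ^ n))
                    = 2 * (m * p\<^sup>2) ^ n * c * (1 - (p / m) ^ n)"
    by (metis mult.assoc)
  show ?thesis
    unfolding square cross by (simp add: algebra_simps)
qed

theorem proposition5p7:
  fixes M :: nat and p :: real and n :: nat
  assumes "M \<ge> 2" and "0 \<le> p" and "p \<le> 1"
  shows "measure_pmf.expectation (pair_pmf (frac_perc M p n) (frac_perc M p n))
           (\<lambda>(S, T). real (num_isolated (grid_set M n S \<inter> grid_set M n T)))
         = (real M * p ^ 2) ^ n *
           (2 - 2 / real M ^ n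
            - 4 * p * (real M - 1) / (real M - p) * (1 - (p / real M) ^ n)
            + 2 * p ^ 2 * (real M - 1) / (real M - p ^ 2) * (1 - (p ^ 2 / real M) ^ n))"
proof -
  have M: "M > 0"
    using assms(1) by simp
  have "measure_pmf.expectation (pair_pmf (frac_perc M p n) (frac_perc M p n))
          (\<lambda>(S, T). real (num_isolated (grid_set M n S \<inter> grid_set M n T)))
        = (\<Sum>j\<in>{1..<M ^ n}. 2 * (p ^ n - adjacent_pair_prob M p n j)\<^sup>2)"
    unfolding expectation_num_isolated_eq_sum_prob_crossing[OF M]
    by (intro sum.cong) (simp_all add: prob_crossing[OF M assms(2,3)])
  also have "\<dots> = 2 * ((real M ^ n - 1) * (p ^ n)\<^sup>2 - 2 * p ^ n * adjacent_pair_moment M p n 1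
                        + adjacent_pair_moment M p n 2)"
    using M by (simp add: adjacent_pair_moment_def power2_diff sum_subtractf sum.distrib
        sum_distrib_left algebra_simps of_nat_diff)
  also have "\<dots> = (real M * p\<^sup>2) ^ n *
           (2 - 2 / real M ^ n
            - 4 * (p * (real M - 1) / (real M - p)) * (1 - (p / real M) ^ n)
            + 2 * (p\<^sup>2 * (real M - 1) / (real M - p\<^sup>2)) * (1 - (p\<^sup>2 / real M) ^ n))"
    unfolding adjacent_pair_moment_eq[OF assms] power_one_right
    by (rule isolated_count_algebra) (use M in simp)
  finally show ?thesis
    by (simp add: mult.assoc)
qed

end
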